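(* Let $(|B(\lambda)\rangle,\mathcal{M})$ be an $N$-regular quantum scenario that is a paradox. Then: 1. For any $z_0,z_1\in\{0,1\}$, $\bigoplus_{j}r(j,0,z_0)\neq\bigoplus_{j}r(j,1,z_1)$. 2. For each $l\in\{0,1\}$, $\bigoplus_{j}r(j,l,0)=\bigoplus_{j}r(j,l,1)$. (Here $j$ ranges over $0,\dots,N-1$.)
   Context: $\equiv$ is equality modulo $2\pi$; $\oplus$ is addition mod 2. For $\varphi\in\mathbb{R}$, $E_\varphi=\cos\varphi X+\sin\varphi Y$, with $+1$ eigenvector $|\varphi\rangle=\frac{1}{\sqrt2}(|0\rangle+e^{i\varphi}|1\rangle)$ and $-1$ eigenvector $|\varphi+\pi\rangle$; outcomes $+1,-1$ relabelled $0,1$; measurements identified with angles. A measurement scenario $\mathcal{M}=(M_1,M_2,M_3)$ consists of finite sets $M_i\subseteq[0,\pi)$ of angles for qubit $i$; contexts are triples in $M_1\times M_2\times M_3$. For a three-qubit state $|\psi\rangle$, the event $(A,B,C)\to(a,b,c)$ is impossible if $(\langle A+a\pi|\otimes\langle B+b\pi|\otimes\langle C+c\pi|)|\psi\rangle=0$; $(|\psi\rangle,\mathcal{M})$ is a paradox if for every assignment $g$ of outcomes in $\{0,1\}$ to all measurements of $M_1,M_2,M_3$ (as disjoint sets) some context $(A,B,C)$ has $(A,B,C)\to(g(A),g(B),g(C))$ impossible. For $\lambda\in[0,\frac{\pi}{2})$, $|v_\lambda\rangle=\cos\frac{\lambda}{2}|0\rangle+\sin\frac{\lambda}{2}|1\rangle$,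 $|w_\lambda\rangle=\sin\frac{\lambda}{2}|0\rangle+\cos\frac{\lambda}{2}|1\rangle$, $|B(\lambda)\rangle=\frac{1}{\sqrt2}(|00\rangle|v_\lambda\rangle+|11\rangle|w_\lambda\rangle)$. Define modulo $2\pi$: $\beta(\lambda,\varphi)=\varphi-2\arctan\left(\frac{\cos\frac{\lambda}{2}\sin\varphi}{\sin\frac{\lambda}{2}+\cos\frac{\lambda}{2}\cos\varphi}\right)$. For $|B(\lambda)\rangle$, $(A,B,C)\to(a,b,c)$ is impossible iff $A+B\equiv\beta(\lambda,C+c\pi)+(1\oplus a\oplus b)\pi$. $(|B(\lambda)\rangle,\mathcal{M})$ is maximally impossible if for every $C\in M_3$ and $z\in\{0,1\}$: every $A\in M_1$ admits $B\in M_2$, $a,b$ with $(A,B,C)\to(a,b,z)$ impossible, and every $B\in M_2$ admits $A\in M_1$, $a,b$ with $(A,B,C)\to(a,b,z)$ impossible. Then $|M_1|=|M_2|=:N$; write $M_1=\{A_0,\dots,A_{N-1}\}$, $M_2=\{B_0,\dots,B_{N-1}\}$, $M_3=\{C_0,\dots,C_{n-1}\}$; for each $(j,l,z)$ there is a unique $k=:K(j,l,z)$ with $A_j+B_k-\beta(\lambda,C_l+z\pi)$ an integer multiple of $\pi$, and $r(j,l,z)\in\{0,1\}$ is defined by $A_j+B_{K(j,l,z)}-\beta(\lambda,C_l+z\pi)\equiv r(j,l,z)\pi$. $\Psi_l(z)$ is the $\mathbb{Z}_2$-linear system $\{a_j\oplus b_{K(j,l,z)}=r(j,l,z):j=0,\dots,N-1\}$.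 With $n=2$, maximal rank means for all $z_0,z_1$ the coefficient matrix of $\Psi_0(z_0)\cup\Psi_1(z_1)$ has rank $2N-1$ over $\mathbb{Z}_2$. $N$-regular: maximally impossible and of maximal rank, with $|M_1|=|M_2|=N$ and $M_3=\{C_0,C_1\}$. *)

theory Defs
  imports Complex_Main "HOL-Library.Z2" "Jordan_Normal_Form.DL_Rank"
begin

text \<open>Computational basis of a qubit: False = |0>, True = |1>.
  ket phi is the +1 eigenvector of E_phi = cos phi X + sin phi Y,
  |phi> = (|0> + e^(i phi)|1>)/sqrt 2.\<close>
definition ket :: "real \<Rightarrow> bool \<Rightarrow> complex" where
  "ket phi x = (if x then cis phi else 1) / complex_of_real (sqrt 2)"

type_synonym state3 = "bool \<Rightarrow> bool \<Rightarrow> bool \<Rightarrow> complex"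

text \<open>Amplitude (<A+a pi| (x) <B+b pi| (x) <C+c pi|) |psi>; outcomes a b c in {0,1}.\<close>
definition amp :: "state3 \<Rightarrow> real \<Rightarrow> real \<Rightarrow> real \<Rightarrow> nat \<Rightarrow> nat \<Rightarrow> nat \<Rightarrow> complex" where
  "amp psi A B C a b c =
     (\<Sum>x\<in>UNIV. \<Sum>y\<in>UNIV. \<Sum>z\<in>UNIV.
        cnj (ket (A + real a * pi) x) * cnj (ket (B + real b * pi) y)
        * cnj (ket (C + real c * pi) z) * psi x y z)"

definition impossible :: "state3 \<Rightarrow> real \<Rightarrow> real \<Rightarrow> real \<Rightarrow> nat \<Rightarrow> nat \<Rightarrow> nat \<Rightarrow> bool" where
  "impossible psi A B C a b c \<longleftrightarrow> amp psi A B C a b c = 0"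

definition meas_set :: "real set \<Rightarrow> bool" where
  "meas_set M \<longleftrightarrow> finite M \<and> M \<subseteq> {0..<pi}"

definition paradox :: "state3 \<Rightarrow> real set \<Rightarrow> real set \<Rightarrow> real set \<Rightarrow> bool" where
  "paradox psi M1 M2 M3 \<longleftrightarrow>
     (\<forall>g1 g2 g3 :: real \<Rightarrow> nat.
        (\<forall>A\<in>M1. g1 A \<in> {0,1}) \<and> (\<forall>B\<in>M2. g2 B \<in> {0,1}) \<and> (\<forall>C\<in>M3. g3 C \<in> {0,1}) \<longrightarrow>
        (\<exists>A\<in>M1. \<exists>B\<in>M2. \<exists>C\<in>M3. impossible psi A B C (g1 A) (g2 B) (g3 C)))"

definition vlam :: "real \<Rightarrow> bool \<Rightarrow> complex" where
  "vlam lam z = complex_of_real (if z then sin (lam/2) else cos (lam/2))"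

definition wlam :: "real \<Rightarrow> bool \<Rightarrow> complex" where
  "wlam lam z = complex_of_real (if z then cos (lam/2) else sin (lam/2))"

text \<open>|B(lam)> = (|00>|v_lam> + |11>|w_lam>)/sqrt 2.\<close>
definition Bstate :: "real \<Rightarrow> state3" where
  "Bstate lam x y z =
     (if x = y then (if x then wlam lam z else vlam lam z) / complex_of_real (sqrt 2) else 0)"

text \<open>When the denominator vanishes the numerator is nonzero
  (as lam < pi/2), so the arctan is +-pi/2 and 2 arctan = pi (mod 2 pi).\<close>
definition beta :: "real \<Rightarrow> real \<Rightarrow> real" where
  "beta lam phi =
     (let d = sin (lam/2) + cos (lam/2) * cos phi
      in if d = 0 then phi - pi else phi - 2 * arctan (cos (lam/2) * sin phi / d))"

definition max_impossible :: "real \<Rightarrow> real set \<Rightarrow> real set \<Rightarrow> real set \<Rightarrow> bool" where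
  "max_impossible lam M1 M2 M3 \<longleftrightarrow>
     (\<forall>C\<in>M3. \<forall>z\<in>{0,1}.
        (\<forall>A\<in>M1. \<exists>B\<in>M2. \<exists>a\<in>{0,1}. \<exists>b\<in>{0,1}. impossible (Bstate lam) A B C a b z) \<and>
        (\<forall>B\<in>M2. \<exists>A\<in>M1. \<exists>a\<in>{0,1}. \<exists>b\<in>{0,1}. impossible (Bstate lam) A B C a b z))"

definition Kidx :: "real \<Rightarrow> (nat \<Rightarrow> real) \<Rightarrow> (nat \<Rightarrow> real) \<Rightarrow> (nat \<Rightarrow> real) \<Rightarrow> nat
    \<Rightarrow> nat \<Rightarrow> nat \<Rightarrow> nat \<Rightarrow> nat" where
  "Kidx lam A B C N j l z =
     (THE k. k < N \<and> (\<exists>m::int. A j + B k - beta lam (C l + real z * pi) = real_of_int m * pi))"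

definition rval :: "real \<Rightarrow> (nat \<Rightarrow> real) \<Rightarrow> (nat \<Rightarrow> real) \<Rightarrow> (nat \<Rightarrow> real) \<Rightarrow> nat
    \<Rightarrow> nat \<Rightarrow> nat \<Rightarrow> nat \<Rightarrow> nat" where
  "rval lam A B C N j l z =
     (if \<exists>m::int. A j + B (Kidx lam A B C N j l z) - beta lam (C l + real z * pi)
                   = 2 * real_of_int m * pi
      then 0 else 1)"

text \<open>Coefficient matrix over Z_2 of Psi_0(z0) \<union> Psi_1(z1): rows i < N are the
  equations a_i + b_K(i,0,z0), rows N+j are a_j + b_K(j,1,z1); columns c < N stand
  for the unknown a_c and columns N+k for the unknown b_k.\<close>
definition coeff_mat :: "real \<Rightarrow> (nat \<Rightarrow> real) \<Rightarrow> (nat \<Rightarrow> real) \<Rightarrow> (nat \<Rightarrow> real) \<Rightarrow> nat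
    \<Rightarrow> nat \<Rightarrow> nat \<Rightarrow> bit mat" where
  "coeff_mat lam A B C N z0 z1 =
     mat (2*N) (2*N) (\<lambda>(i,c).
       let j = (if i < N then i else i - N);
           l = (if i < N then 0 else 1);
           z = (if i < N then z0 else z1)
       in if c = j \<or> c = N + Kidx lam A B C N j l z then 1 else 0)"

definition max_rank :: "real \<Rightarrow> (nat \<Rightarrow> real) \<Rightarrow> (nat \<Rightarrow> real) \<Rightarrow> (nat \<Rightarrow> real) \<Rightarrow> nat \<Rightarrow> bool" where
  "max_rank lam A B C N \<longleftrightarrow>
     (\<forall>z0\<in>{0,1}. \<forall>z1\<in>{0,1}.
        vec_space.rank (2*N) (coeff_mat lam A B C N z0 z1) = 2*N - 1)"

definition N_regular :: "real \<Rightarrow> (nat \<Rightarrow> real) \<Rightarrow> (nat \<Rightarrow> real) \<Rightarrow> (nat \<Rightarrow> real) \<Rightarrow> nat \<Rightarrow> bool" where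
  "N_regular lam A B C N \<longleftrightarrow>
     inj_on A {..<N} \<and> inj_on B {..<N} \<and> C 0 \<noteq> C 1 \<and>
     meas_set (A ` {..<N}) \<and> meas_set (B ` {..<N}) \<and> meas_set {C 0, C 1} \<and>
     max_impossible lam (A ` {..<N}) (B ` {..<N}) {C 0, C 1} \<and>
     max_rank lam A B C N"

end

theory Submission
  imports Defs
begin

text \<open>
  An impossible event (A,B,C) -> (a,b,z) of B(\<lambda>) forces A + B = \<beta>(\<lambda>, C + z\<pi>) + (1 + a + b)\<pi>
  modulo 2\<pi>.  In an N-regular scenario this pins B down to B_K(j,l,z) and says that
  a + b differs from r(j,l,z) modulo 2.  Hence a solution of \<Psi>_0(z0) \<union> \<Psi>_1(z1), read as an
  outcome assignment completed by C_l -> z_l, makes no context impossible: under a paradox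
  the system has no solution.  On the other hand K(-,l,z) is a permutation, so every unknown
  occurs in exactly one equation of each subsystem and all column sums of the coefficient
  matrix vanish over Z_2.  As the matrix has rank 2N - 1, its column space is the whole
  zero-sum hyperplane, so the system is solvable whenever the right-hand side has zero sum,
  i.e. whenever the two parities of r agree.  This gives the first claim; the second follows
  because two bits that both differ from a third one are equal.
\<close>

(* For \<zeta> = zeta \<lambda> \<gamma>: sqrt 2 <\<gamma>|v_\<lambda>> = cis (-\<gamma>) \<zeta>, sqrt 2 <\<gamma>|w_\<lambda>> = cnj \<zeta>,
   and \<beta>(\<lambda>,\<gamma>) = \<gamma> - 2 arg \<zeta>. *)
definition zeta :: "real \<Rightarrow> real \<Rightarrow> complex" where
  "zeta lam g = complex_of_real (sin (lam/2)) + complex_of_real (cos (lam/2)) * cis g"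

lemma amp_Bstate:
  "4 * amp (Bstate lam) A B C a b c =
     cis (-(C + real c * pi)) * zeta lam (C + real c * pi)
     + cis (-(A + real a * pi + (B + real b * pi))) * cnj (zeta lam (C + real c * pi))"
proof -
  have "complex_of_real (sqrt 2) * (complex_of_real (sqrt 2) * complex_of_real (sqrt 2)
      * complex_of_real (sqrt 2)) = 4"
    by (simp flip: of_real_mult)
  then show ?thesis
    unfolding amp_def Bstate_def ket_def vlam_def wlam_def zeta_def
    by (simp add: UNIV_bool cis_cnj cis_mult algebra_simps)
qed

lemma zeta_neq_zero:
  assumes "cos lam \<noteq> 0"
  shows "zeta lam g \<noteq> 0"
proof
  assume "zeta lam g = 0"
  then have re: "sin (lam/2) = - cos (lam/2) * cos g" and im: "cos (lam/2) * sin g = 0"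
    by (auto simp: zeta_def complex_eq_iff)
  have "(sin (lam/2))\<^sup>2 = (cos (lam/2))\<^sup>2 * (cos g)\<^sup>2"
    using re by (simp add: power_mult_distrib)
  also have "\<dots> = (cos (lam/2))\<^sup>2 - (cos (lam/2) * sin g)\<^sup>2"
    by (simp add: power_mult_distrib cos_squared_eq algebra_simps)
  also have "\<dots> = (cos (lam/2))\<^sup>2"
    using im by simp
  finally have "cos lam = 0"
    using cos_double[of "lam/2"] by simp
  with assms show False ..
qed

lemma cis_beta:
  "cis (beta lam g) * zeta lam g = cis g * cnj (zeta lam g)"
proof (cases "sin (lam/2) + cos (lam/2) * cos g = 0")
  case True
  then have "beta lam g = g - pi" and "cnj (zeta lam g) = - zeta lam g"
    by (simp_all add: beta_def zeta_def complex_eq_iff)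
  then show ?thesis
    by (simp add: complex_eq_iff)
next
  case False
  define d where "d = sin (lam/2) + cos (lam/2) * cos g"
  define e where "e = cos (lam/2) * sin g"
  define t where "t = arctan (e / d)"
  have "beta lam g = g - 2 * t"
    using False unfolding beta_def Let_def t_def e_def d_def by simp
  have zeta: "zeta lam g = Complex d e" and cnj_zeta: "cnj (zeta lam g) = Complex d (-e)"
    by (simp_all add: zeta_def complex_eq_iff d_def e_def)
  have "d * sin t = e * cos t"
    using tan_arctan[of "e/d"] False cos_arctan_not_zero[of "e/d"]
    unfolding t_def d_def tan_def by (simp add: field_simps)
  then have rotate: "cis (-t) * Complex d e = cis t * Complex d (-e)"
    by (simp add: complex_eq_iff algebra_simps)
  have "cis (beta lam g) * zeta lam g = cis (g - t) * (cis (-t) * Complex d e)"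
    by (simp add: \<open>beta lam g = g - 2 * t\<close> zeta cis_mult flip: mult.assoc)
  also have "\<dots> = cis g * cnj (zeta lam g)"
    by (simp add: rotate cnj_zeta cis_mult flip: mult.assoc)
  finally show ?thesis .
qed

lemma impossible_Bstate_angle:
  assumes "cos lam \<noteq> 0" and "impossible (Bstate lam) A B C a b c"
  shows "\<exists>n::int. A + B - beta lam (C + real c * pi) = real_of_int (2 * n + 1 - int a - int b) * pi"
proof -
  define g where "g = C + real c * pi"
  define \<theta> where "\<theta> = A + real a * pi + (B + real b * pi)"
  define \<zeta> where "\<zeta> = zeta lam g"
  have "cis (-g) * \<zeta> + cis (-\<theta>) * cnj \<zeta> = 0"
    using assms(2) amp_Bstate[of lam A B C a b c]
    by (simp add: impossible_def g_def \<theta>_def \<zeta>_def)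
  then have "cis (\<theta> + g) * (cis (-g) * \<zeta> + cis (-\<theta>) * cnj \<zeta>) = 0"
    by simp
  moreover have "cis (\<theta> + g) * (cis (-g) * \<zeta> + cis (-\<theta>) * cnj \<zeta>)
      = cis \<theta> * \<zeta> + cis g * cnj \<zeta>"
    by (simp add: distrib_left cis_mult flip: mult.assoc)
  ultimately have "(cis \<theta> + cis (beta lam g)) * \<zeta> = 0"
    by (simp add: cis_beta distrib_right \<zeta>_def)
  then have "cis \<theta> = cis (beta lam g + pi)"
    using zeta_neq_zero[OF assms(1)] by (simp add: \<zeta>_def minus_cis flip: eq_neg_iff_add_eq_0)
  then have "cis (\<theta> - (beta lam g + pi)) = 1"
    by (simp flip: cis_divide)
  then have "cos (\<theta> - (beta lam g + pi)) = 1"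
    by (metis cis.sel(1) one_complex.sel(1))
  then obtain n :: int where "\<theta> - (beta lam g + pi) = real_of_int n * 2 * pi"
    by (auto simp: cos_one_2pi_int)
  then have "A + B - beta lam g = real_of_int (2 * n + 1 - int a - int b) * pi"
    by (simp add: \<theta>_def algebra_simps)
  then show ?thesis
    unfolding g_def ..
qed

lemma (in vec_space) zero_sum_submodule:
  "submodule class_ring {u \<in> carrier_vec n. (\<Sum>i<n. u $ i) = 0} V"
  by unfold_locales (auto simp: sum.distrib simp flip: sum_distrib_left)

lemma (in vec_space) zero_sum_vec_in_col_space:
  fixes M :: "'a mat"
  assumes M: "M \<in> carrier_mat n nc" and "n > 0" and rank: "rank M = n - 1"
    and col_sums: "\<And>c. c < nc \<Longrightarrow> (\<Sum>i<n. M $$ (i, c)) = 0"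
    and v: "v \<in> carrier_vec n" and v_sum: "(\<Sum>i<n. v $ i) = 0"
  shows "v \<in> col_space M"
proof (rule ccontr)
  \<comment> \<open>otherwise a maximal independent set of columns, v and a vector outside the zero-sum
     hyperplane would be n + 1 independent vectors\<close>
  assume v_notin: "v \<notin> col_space M"
  define H :: "'a vec set" where "H = {u \<in> carrier_vec n. (\<Sum>i<n. u $ i) = 0}"
  have cols_H: "set (cols M) \<subseteq> H"
    using M col_sums by (auto simp: H_def cols_def)
  have cols_carrier: "set (cols M) \<subseteq> carrier_vec n"
    using M cols_dim by blast
  obtain S where S: "maximal S (\<lambda>T. T \<subseteq> set (cols M) \<and> lin_indpt T)" and "finite S"
    using maximal_exists_superset[of "set (cols M)" "\<lambda>T. T \<subseteq> set (cols M) \<and> lin_indpt T" "{}"]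
    by (auto simp: lin_dep_def)
  have "card S = n - 1"
    using rank_card_indpt[OF M S] rank by simp
  have S_cols: "S \<subseteq> set (cols M)" and "lin_indpt S"
    using S unfolding maximal_def by auto
  then have S_carrier: "S \<subseteq> carrier_vec n"
    using cols_carrier by auto
  have "v \<notin> span S"
    using v_notin span_is_monotone[OF S_cols] by (auto simp: col_space_def)
  then have "v \<notin> S" and indpt_Sv: "lin_indpt (insert v S)"
    using in_own_span[OF S_carrier] lin_dep_iff_in_span[OF S_carrier \<open>lin_indpt S\<close> v] by auto
  have Sv_carrier: "insert v S \<subseteq> carrier_vec n"
    using S_carrier v by auto
  define e :: "'a vec" where "e = unit_vec n 0"
  have "e \<notin> H"
    using \<open>n > 0\<close> by (simp add: H_def e_def unit_vec_def sum.delta)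
  moreover have "span (insert v S) \<subseteq> H"
    using S_cols cols_H v v_sum by (intro span_is_subset[OF _ zero_sum_submodule[folded H_def]]) (auto simp: H_def)
  ultimately have "e \<notin> span (insert v S)"
    by auto
  moreover have "e \<in> carrier_vec n"
    by (simp add: e_def)
  ultimately have "e \<notin> insert v S" and "lin_indpt (insert e (insert v S))"
    using in_own_span[OF Sv_carrier] lin_dep_iff_in_span[OF Sv_carrier indpt_Sv] by auto
  then have "card (insert e (insert v S)) \<le> n"
    using li_le_dim(2)[OF fin_dim] Sv_carrier \<open>e \<in> carrier_vec n\<close> dim_is_n by simp
  moreover have "card (insert e (insert v S)) = n + 1"
    using \<open>card S = n - 1\<close> \<open>v \<notin> S\<close> \<open>e \<notin> insert v S\<close> \<open>finite S\<close> \<open>n > 0\<close> by simp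
  ultimately show False
    by simp
qed

lemma eq_if_diff_multiple_pi:
  fixes x y :: real and m :: int
  assumes "0 \<le> x" "x < pi" "0 \<le> y" "y < pi" and "x - y = real_of_int m * pi"
  shows "x = y"
proof -
  have "\<bar>x - y\<bar> < pi"
    using assms(1-4) by linarith
  then have "\<bar>real_of_int m\<bar> * pi < 1 * pi"
    using assms(5) by (simp add: abs_mult)
  then have "m = 0"
    by simp
  then show ?thesis
    using assms(5) by simp
qed

lemma sum_lessThan_double:
  fixes f :: "nat \<Rightarrow> 'a::comm_monoid_add"
  shows "(\<Sum>i<2*n. f i) = (\<Sum>i<n. f i) + (\<Sum>i<n. f (n + i))"
  using sum.atLeastLessThan_concat[of 0 n "2*n" f] sum.shift_bounds_nat_ivl[of f 0 n n]
  by (simp add: atLeast0LessThan add.commute mult_2)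

lemma sum_two_indicators:
  fixes f :: "nat \<Rightarrow> 'a::semiring_1"
  assumes "finite S" "i \<in> S" "k \<in> S" "i \<noteq> k"
  shows "(\<Sum>c\<in>S. (if c = i \<or> c = k then 1 else 0) * f c) = f i + f k"
proof -
  have "(\<Sum>c\<in>S. (if c = i \<or> c = k then 1 else 0) * f c)
      = (\<Sum>c\<in>S. (if c = i then f c else 0) + (if c = k then f c else 0))"
    using assms(4) by (intro sum.cong) auto
  also have "\<dots> = f i + f k"
    using assms(1-3) by (simp add: sum.distrib sum.delta)
  finally show ?thesis .
qed

lemma of_nat_bit: "(of_nat n :: bit) = of_bool (odd n)"
  by (induction n) auto

lemma parity_eq_if_both_differ:
  fixes x y w :: nat
  assumes "x mod 2 \<noteq> w mod 2" and "y mod 2 \<noteq> w mod 2"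
  shows "x mod 2 = y mod 2"
  using assms by presburger

locale regular_scenario =
  fixes lam :: real and A B C :: "nat \<Rightarrow> real" and N :: nat
  assumes lam_nonneg: "0 \<le> lam" and lam_less: "lam < pi / 2"
    and regular: "N_regular lam A B C N"
begin

abbreviation K :: "nat \<Rightarrow> nat \<Rightarrow> nat \<Rightarrow> nat" where
  "K \<equiv> Kidx lam A B C N"

abbreviation r :: "nat \<Rightarrow> nat \<Rightarrow> nat \<Rightarrow> nat" where
  "r \<equiv> rval lam A B C N"

abbreviation M :: "nat \<Rightarrow> nat \<Rightarrow> bit mat" where
  "M \<equiv> coeff_mat lam A B C N"

abbreviation beta_C :: "nat \<Rightarrow> nat \<Rightarrow> real" where
  "beta_C l z \<equiv> beta lam (C l + real z * pi)"

lemma cos_lam_neq_zero: "cos lam \<noteq> 0"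
proof -
  have "cos lam > 0"
    using lam_nonneg lam_less by (intro cos_gt_zero_pi) auto
  then show ?thesis
    by simp
qed

lemma inj_A: "inj_on A {..<N}" and inj_B: "inj_on B {..<N}" and C_distinct: "C 0 \<noteq> C 1"
  and max_imp: "max_impossible lam (A ` {..<N}) (B ` {..<N}) {C 0, C 1}"
  and rank_M: "\<And>z0 z1. z0 \<in> {0,1} \<Longrightarrow> z1 \<in> {0,1} \<Longrightarrow> vec_space.rank (2*N) (M z0 z1) = 2*N - 1"
  using regular unfolding N_regular_def max_rank_def by auto

lemma A_range: "j < N \<Longrightarrow> 0 \<le> A j \<and> A j < pi"
  and B_range: "k < N \<Longrightarrow> 0 \<le> B k \<and> B k < pi"
  using regular unfolding N_regular_def meas_set_def by auto

lemma Kidx_exists: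
  assumes "j < N" "l \<in> {0,1}" "z \<in> {0,1}"
  shows "\<exists>k<N. \<exists>m::int. A j + B k - beta_C l z = real_of_int m * pi"
proof -
  have "C l \<in> {C 0, C 1}" and "A j \<in> A ` {..<N}"
    using assms(1,2) by auto
  then have "\<exists>b\<in>B ` {..<N}. \<exists>a\<in>{0,1}. \<exists>b'\<in>{0,1}. impossible (Bstate lam) (A j) b (C l) a b' z"
    using max_imp assms(3) unfolding max_impossible_def by blast
  then obtain k a b where "k < N" and "impossible (Bstate lam) (A j) (B k) (C l) a b z"
    by blast
  then show ?thesis
    using impossible_Bstate_angle[OF cos_lam_neq_zero] by blast
qed

lemma Kidx_unique:
  assumes "k < N" "k' < N"
    and "A j + B k - beta_C l z = real_of_int m * pi"
    and "A j + B k' - beta_C l z = real_of_int m' * pi"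
  shows "k = k'"
proof -
  have "B k - B k' = real_of_int (m - m') * pi"
    using assms(3,4) by (simp add: algebra_simps)
  then have "B k = B k'"
    using eq_if_diff_multiple_pi B_range[OF assms(1)] B_range[OF assms(2)] by blast
  then show ?thesis
    using inj_B assms(1,2) by (auto dest: inj_onD)
qed

lemma Kidx_spec:
  assumes "j < N" "l \<in> {0,1}" "z \<in> {0,1}"
  shows "K j l z < N" and "\<exists>m::int. A j + B (K j l z) - beta_C l z = real_of_int m * pi"
proof -
  have "\<exists>!k. k < N \<and> (\<exists>m::int. A j + B k - beta_C l z = real_of_int m * pi)"
    using Kidx_exists[OF assms] Kidx_unique by blast
  from theI'[OF this] show "K j l z < N" and "\<exists>m::int. A j + B (K j l z) - beta_C l z = real_of_int m * pi"
    unfolding Kidx_def by blast+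
qed

lemma Kidx_eqI:
  assumes "j < N" "l \<in> {0,1}" "z \<in> {0,1}" "k < N"
    and "A j + B k - beta_C l z = real_of_int m * pi"
  shows "K j l z = k"
  using Kidx_spec[OF assms(1-3)] Kidx_unique[OF _ assms(4) _ assms(5)] by blast

lemma bij_betw_Kidx:
  assumes "l \<in> {0,1}" "z \<in> {0,1}"
  shows "bij_betw (\<lambda>j. K j l z) {..<N} {..<N}"
proof -
  have "inj_on (\<lambda>j. K j l z) {..<N}"
  proof (rule inj_onI)
    fix j j' assume j: "j \<in> {..<N}" and j': "j' \<in> {..<N}" and eq: "K j l z = K j' l z"
    obtain m m' :: int where "A j + B (K j l z) - beta_C l z = real_of_int m * pi"
      and "A j' + B (K j l z) - beta_C l z = real_of_int m' * pi"
      using Kidx_spec(2)[OF _ assms] j j' eq by (metis lessThan_iff)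
    then have "A j - A j' = real_of_int (m - m') * pi"
      by (simp add: algebra_simps)
    then have "A j = A j'"
      using eq_if_diff_multiple_pi A_range j j' by (meson lessThan_iff)
    then show "j = j'"
      using inj_A j j' by (auto dest: inj_onD)
  qed
  moreover have "(\<lambda>j. K j l z) ` {..<N} \<subseteq> {..<N}"
    using Kidx_spec(1)[OF _ assms] by auto
  ultimately show ?thesis
    by (simp add: bij_betw_def endo_inj_surj)
qed

lemma rval_spec:
  assumes "j < N" "l \<in> {0,1}" "z \<in> {0,1}"
  shows "\<exists>m::int. A j + B (K j l z) - beta_C l z = real_of_int (2 * m + int (r j l z)) * pi"
proof -
  obtain m0 :: int where m0: "A j + B (K j l z) - beta_C l z = real_of_int m0 * pi"
    using Kidx_spec(2)[OF assms] by blast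
  have "real_of_int m0 * pi = 2 * real_of_int m * pi \<longleftrightarrow> m0 = 2 * m" for m :: int
    by (metis mult_cancel_right pi_neq_zero of_int_eq_iff of_int_mult of_int_numeral)
  then have "r j l z = of_bool (odd m0)"
    unfolding rval_def m0 by (auto simp: dvd_def)
  then show ?thesis
    using m0 by (intro exI[of _ "m0 div 2"]) (simp add: of_bool_odd_eq_mod_2)
qed

lemma impossible_context:
  assumes "j < N" "k < N" "l \<in> {0,1}" "z \<in> {0,1}"
    and "impossible (Bstate lam) (A j) (B k) (C l) a b z"
  shows "K j l z = k" and "odd (a + b + r j l z)"
proof -
  obtain n :: int where n: "A j + B k - beta_C l z = real_of_int (2 * n + 1 - int a - int b) * pi"
    using impossible_Bstate_angle[OF cos_lam_neq_zero assms(5)] by blast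
  then show K: "K j l z = k"
    by (rule Kidx_eqI[OF assms(1,3,4,2)])
  obtain m :: int where "A j + B k - beta_C l z = real_of_int (2 * m + int (r j l z)) * pi"
    using rval_spec[OF assms(1,3,4)] K by blast
  with n have "2 * n + 1 - int a - int b = 2 * m + int (r j l z)"
    by simp
  then have "int (a + b + r j l z) = 2 * (n - m) + 1"
    by simp
  then have "odd (int (a + b + r j l z))"
    by simp
  then show "odd (a + b + r j l z)"
    by simp
qed

lemma coeff_mat_carrier: "M z0 z1 \<in> carrier_mat (2*N) (2*N)"
  by (simp add: coeff_mat_def)

lemma coeff_mat_upper:
  "i < N \<Longrightarrow> c < 2*N \<Longrightarrow> M z0 z1 $$ (i, c) = (if c = i \<or> c = N + K i 0 z0 then 1 else 0)"
  by (simp add: coeff_mat_def)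

lemma coeff_mat_lower:
  "i < N \<Longrightarrow> c < 2*N \<Longrightarrow> M z0 z1 $$ (N + i, c) = (if c = i \<or> c = N + K i 1 z1 then 1 else 0)"
  by (simp add: coeff_mat_def)

lemma half_column_sum:
  assumes "c < 2*N" "l \<in> {0,1}" "z \<in> {0,1}"
  shows "(\<Sum>i<N. if c = i \<or> c = N + K i l z then 1 else 0 :: bit) = 1"
proof -
  obtain i0 where "i0 < N" and i0: "\<And>i. i < N \<Longrightarrow> c = i \<or> c = N + K i l z \<longleftrightarrow> i = i0"
  proof (cases "c < N")
    case True
    then show ?thesis
      by (intro that[of c]) auto
  next
    case False
    define k where "k = c - N"
    have "k < N" and c: "c = N + k"
      using False assms(1) by (auto simp: k_def)
    have bij: "bij_betw (\<lambda>i. K i l z) {..<N} {..<N}"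
      by (rule bij_betw_Kidx[OF assms(2,3)])
    then have "k \<in> (\<lambda>i. K i l z) ` {..<N}"
      using \<open>k < N\<close> by (simp add: bij_betw_def)
    then obtain i0 where "i0 < N" "K i0 l z = k"
      by auto
    moreover have "K i l z = K i0 l z \<longleftrightarrow> i = i0" if "i < N" for i
      using bij_betw_imp_inj_on[OF bij] that \<open>i0 < N\<close> by (auto dest: inj_onD)
    ultimately show ?thesis
      using False c by (intro that[of i0]) auto
  qed
  then have "(\<Sum>i<N. if c = i \<or> c = N + K i l z then 1 else 0 :: bit) = (\<Sum>i<N. if i = i0 then 1 else 0)"
    by (intro sum.cong) auto
  also have "\<dots> = 1"
    using \<open>i0 < N\<close> by simp
  finally show ?thesis .
qed

lemma coeff_mat_column_sum:
  assumes "z0 \<in> {0,1}" "z1 \<in> {0,1}" "c < 2*N"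
  shows "(\<Sum>i<2*N. M z0 z1 $$ (i, c)) = 0"
proof -
  have "(\<Sum>i<2*N. M z0 z1 $$ (i, c))
      = (\<Sum>i<N. if c = i \<or> c = N + K i 0 z0 then 1 else 0)
        + (\<Sum>i<N. if c = i \<or> c = N + K i 1 z1 then 1 else 0)"
    using assms(3) by (simp add: sum_lessThan_double coeff_mat_upper coeff_mat_lower)
  also have "\<dots> = 1 + 1"
    using assms by (simp add: half_column_sum)
  finally show ?thesis
    by simp
qed

lemma coeff_mat_mult_upper:
  assumes "x \<in> carrier_vec (2*N)" "i < N" "z0 \<in> {0,1}"
  shows "(M z0 z1 *\<^sub>v x) $ i = x $ i + x $ (N + K i 0 z0)"
proof -
  have "(M z0 z1 *\<^sub>v x) $ i = (\<Sum>c<2*N. M z0 z1 $$ (i, c) * x $ c)"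
    using assms(1,2) coeff_mat_carrier[of z0 z1] by (simp add: scalar_prod_def lessThan_atLeast0)
  also have "\<dots> = (\<Sum>c<2*N. (if c = i \<or> c = N + K i 0 z0 then 1 else 0) * x $ c)"
    using assms(2) by (intro sum.cong) (simp_all add: coeff_mat_upper)
  also have "\<dots> = x $ i + x $ (N + K i 0 z0)"
    using assms(2) Kidx_spec(1)[OF assms(2) _ assms(3)] by (intro sum_two_indicators) auto
  finally show ?thesis .
qed

lemma coeff_mat_mult_lower:
  assumes "x \<in> carrier_vec (2*N)" "i < N" "z1 \<in> {0,1}"
  shows "(M z0 z1 *\<^sub>v x) $ (N + i) = x $ i + x $ (N + K i 1 z1)"
proof -
  have "(M z0 z1 *\<^sub>v x) $ (N + i) = (\<Sum>c<2*N. M z0 z1 $$ (N + i, c) * x $ c)"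
    using assms(1,2) coeff_mat_carrier[of z0 z1] by (simp add: scalar_prod_def lessThan_atLeast0)
  also have "\<dots> = (\<Sum>c<2*N. (if c = i \<or> c = N + K i 1 z1 then 1 else 0) * x $ c)"
    using assms(2) by (intro sum.cong) (simp_all add: coeff_mat_lower)
  also have "\<dots> = x $ i + x $ (N + K i 1 z1)"
    using assms(2) Kidx_spec(1)[OF assms(2) _ assms(3)] by (intro sum_two_indicators) auto
  finally show ?thesis .
qed

definition rhs :: "nat \<Rightarrow> nat \<Rightarrow> bit vec" where
  "rhs z0 z1 = vec (2*N) (\<lambda>i. if i < N then of_nat (r i 0 z0) else of_nat (r (i - N) 1 z1))"

lemma system_solvable:
  assumes "N > 0" "z0 \<in> {0,1}" "z1 \<in> {0,1}"
    and "(\<Sum>j<N. r j 0 z0) mod 2 = (\<Sum>j<N. r j 1 z1) mod 2"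
  shows "\<exists>x\<in>carrier_vec (2*N). M z0 z1 *\<^sub>v x = rhs z0 z1"
proof -
  have "even ((\<Sum>j<N. r j 0 z0) + (\<Sum>j<N. r j 1 z1))"
    using assms(4) by (metis even_add even_iff_mod_2_eq_zero)
  then have "(of_nat ((\<Sum>j<N. r j 0 z0) + (\<Sum>j<N. r j 1 z1)) :: bit) = 0"
    by (simp only: of_nat_bit) simp
  then have "(\<Sum>i<2*N. rhs z0 z1 $ i) = 0"
    by (simp add: rhs_def sum_lessThan_double)
  moreover have "rhs z0 z1 \<in> carrier_vec (2*N)"
    by (simp add: rhs_def)
  ultimately have "rhs z0 z1 \<in> vec_space.col_space (2*N) (M z0 z1)"
    using assms(1) coeff_mat_column_sum[OF assms(2,3)]
    by (intro vec_space.zero_sum_vec_in_col_space[OF coeff_mat_carrier _ rank_M[OF assms(2,3)]]) auto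
  then show ?thesis
    using vec_space.col_space_eq[OF coeff_mat_carrier] coeff_mat_carrier[of z0 z1] by auto
qed

lemma solution_satisfies_equations:
  assumes "x \<in> carrier_vec (2*N)" "M z0 z1 *\<^sub>v x = rhs z0 z1"
    and "j < N" "z0 \<in> {0,1}" "z1 \<in> {0,1}"
  shows "x $ j + x $ (N + K j 0 z0) = of_nat (r j 0 z0)"
    and "x $ j + x $ (N + K j 1 z1) = of_nat (r j 1 z1)"
proof -
  have "rhs z0 z1 $ j = of_nat (r j 0 z0)" and "rhs z0 z1 $ (N + j) = of_nat (r j 1 z1)"
    using assms(3) by (simp_all add: rhs_def)
  then show "x $ j + x $ (N + K j 0 z0) = of_nat (r j 0 z0)"
    and "x $ j + x $ (N + K j 1 z1) = of_nat (r j 1 z1)"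
    using coeff_mat_mult_upper[OF assms(1,3,4), of z1] coeff_mat_mult_lower[OF assms(1,3,5), of z0]
    by (simp_all only: assms(2))
qed

lemma system_unsolvable_if_paradox:
  assumes paradox: "paradox (Bstate lam) (A ` {..<N}) (B ` {..<N}) {C 0, C 1}"
    and z0: "z0 \<in> {0,1}" and z1: "z1 \<in> {0,1}" and x: "x \<in> carrier_vec (2*N)"
  shows "M z0 z1 *\<^sub>v x \<noteq> rhs z0 z1"
proof
  assume sol: "M z0 z1 *\<^sub>v x = rhs z0 z1"
  define outcome :: "bit \<Rightarrow> nat" where "outcome y = of_bool (y = 1)" for y
  define g1 where "g1 a = outcome (x $ the_inv_into {..<N} A a)" for a
  define g2 where "g2 b = outcome (x $ (N + the_inv_into {..<N} B b))" for b
  define g3 where "g3 c = (if c = C 0 then z0 else z1)" for c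
  have "\<forall>a\<in>A ` {..<N}. g1 a \<in> {0,1}" and "\<forall>b\<in>B ` {..<N}. g2 b \<in> {0,1}"
    and "\<forall>c\<in>{C 0, C 1}. g3 c \<in> {0,1}"
    using z0 z1 by (auto simp: g1_def g2_def g3_def outcome_def)
  then have "\<exists>a\<in>A ` {..<N}. \<exists>b\<in>B ` {..<N}. \<exists>c\<in>{C 0, C 1}.
      impossible (Bstate lam) a b c (g1 a) (g2 b) (g3 c)"
    using paradox[unfolded paradox_def, rule_format, of g1 g2 g3] by blast
  then obtain j k l where j: "j < N" and k: "k < N" and l: "l \<in> {0,1}"
    and "impossible (Bstate lam) (A j) (B k) (C l) (g1 (A j)) (g2 (B k)) (g3 (C l))"
    by blast
  moreover have "g1 (A j) = outcome (x $ j)" and "g2 (B k) = outcome (x $ (N + k))"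
    using j k by (simp_all add: g1_def g2_def the_inv_into_f_f[OF inj_A] the_inv_into_f_f[OF inj_B])
  moreover define z where "z = g3 (C l)"
  moreover have z: "z \<in> {0,1}" and z_eq: "z = (if l = 0 then z0 else z1)"
    using l z0 z1 C_distinct by (auto simp: z_def g3_def)
  ultimately have K: "K j l z = k" and odd: "odd (outcome (x $ j) + outcome (x $ (N + k)) + r j l z)"
    using impossible_context[OF j k l z] by simp_all
  have "x $ j + x $ (N + K j l z) = of_nat (r j l z)"
    using solution_satisfies_equations[OF x sol j z0 z1] l z_eq by auto
  moreover have "of_nat (outcome y) = y" for y
    by (cases y) (simp_all add: outcome_def)
  ultimately have "(of_nat (outcome (x $ j) + outcome (x $ (N + k)) + r j l z) :: bit) = 0"
    using K by simp
  with odd show False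
    by (simp only: of_nat_bit) simp
qed

lemma parities_differ:
  assumes paradox: "paradox (Bstate lam) (A ` {..<N}) (B ` {..<N}) {C 0, C 1}"
    and "z0 \<in> {0,1}" and "z1 \<in> {0,1}"
  shows "(\<Sum>j<N. r j 0 z0) mod 2 \<noteq> (\<Sum>j<N. r j 1 z1) mod 2"
proof
  assume "(\<Sum>j<N. r j 0 z0) mod 2 = (\<Sum>j<N. r j 1 z1) mod 2"
  moreover have "N > 0"
  proof (rule ccontr)
    assume "\<not> N > 0"
    then show False
      using paradox[unfolded paradox_def, rule_format, of "\<lambda>_. 0" "\<lambda>_. 0" "\<lambda>_. 0"] by simp
  qed
  ultimately obtain x where "x \<in> carrier_vec (2*N)" and "M z0 z1 *\<^sub>v x = rhs z0 z1"
    using system_solvable assms(2,3) by blast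
  then show False
    using system_unsolvable_if_paradox assms by blast
qed

end

theorem corollary18:
  fixes lam :: real and A B C :: "nat \<Rightarrow> real" and N :: nat
  assumes "0 \<le> lam" and "lam < pi / 2"
    and "N_regular lam A B C N"
    and "paradox (Bstate lam) (A ` {..<N}) (B ` {..<N}) {C 0, C 1}"
  shows "(\<forall>z0\<in>{0::nat,1}. \<forall>z1\<in>{0::nat,1}.
            (\<Sum>j<N. rval lam A B C N j 0 z0) mod 2 \<noteq> (\<Sum>j<N. rval lam A B C N j 1 z1) mod 2)
       \<and> (\<forall>l\<in>{0::nat,1}.
            (\<Sum>j<N. rval lam A B C N j l 0) mod 2 = (\<Sum>j<N. rval lam A B C N j l 1) mod 2)"
proof -
  interpret regular_scenario lam A B C N
    using assms(1-3) by unfold_locales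
  note differ = parities_differ[OF assms(4)]
  have "(\<Sum>j<N. r j l 0) mod 2 = (\<Sum>j<N. r j l 1) mod 2" if "l \<in> {0,1}" for l :: nat
    using that
  proof
    assume "l = 0"
    then show ?thesis
      using parity_eq_if_both_differ[OF differ[of 0 0] differ[of 1 0]] by simp
  next
    assume "l \<in> {1}"
    then show ?thesis
      using parity_eq_if_both_differ[OF differ[of 0 0, symmetric] differ[of 0 1, symmetric]] by simp
  qed
  with differ show ?thesis
    by blast
qed

end
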